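(* Let $\gamma:[0,1]\to\mathbb R^d$ be bounded and measurable, let $\alpha\in(0,1]$, $b\in L^1_tC^{\alpha,\mathrm{loc}}_x$, and consider the ODE $y_t=y_0+\int_0^tb_s(y_s)\mathrm ds+\gamma_t$. Suppose it admits a locally $\beta$-Hölder continuous semiflow $\Phi$ with $\beta(1+\alpha)>1$. Then for any $0\le S\le T\le1$ and $y\in\mathbb R^d$ there exists a unique solution $z:[S,T]\to\mathbb R^d$ of $z_t=y+\int_S^tb_r(z_r)\mathrm dr+\gamma_t-\gamma_S$, $t\in[S,T]$, and it is given by $z_t=\Phi_{S\to t}(y)$.
   Context: $C^{\alpha,\mathrm{loc}}_x$ is the space of functions $f$ on $\mathbb R^d$ with $fg\in C^\alpha_x$ for every smooth compactly supported $g$ (locally $\alpha$-Hölder functions for $\alpha<1$); $L^1_tC^{\alpha,\mathrm{loc}}_x=L^1([0,1];C^{\alpha,\mathrm{loc}}_x)$ (all local seminorms integrable). A semiflow is a jointly measurable $\Phi:\{0\le s\le t\le1\}\times\mathbb R^d\to\mathbb R^d$ with $\Phi_{s\to t}(x)=x+\int_s^tb_r(\Phi_{s\to r}(x))\mathrm dr+\gamma_t-\gamma_s$ for all $(s,x)$, $t\in[s,1]$, and $\Phi_{s\to t}(x)=\Phi_{r\to t}(\Phi_{s\to r}(x))$ for $s\le r\le t$. It is locally $\beta$-Hölder continuous if for every $K>0$ there is $N$ with $|\Phi_{s\to t}(x)-\Phi_{s\to t}(y)|\le N|x-y|^\beta$ for all $s\le t$ and $x,y\in B_K$. *)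

theory Defs
  imports "HOL-Analysis.Analysis"
begin

definition holder_norm_ball :: "real \<Rightarrow> real \<Rightarrow> ('a::euclidean_space \<Rightarrow> 'a) \<Rightarrow> ennreal" where
  "holder_norm_ball \<alpha> K f =
     (SUP x\<in>cball 0 K. ennreal (norm (f x))) +
     (SUP p\<in>{(x, y). x \<in> cball 0 K \<and> y \<in> cball 0 K \<and> x \<noteq> y}.
        ennreal (norm (f (fst p) - f (snd p)) / norm (fst p - snd p) powr \<alpha>))"

definition L1_Cloc :: "real \<Rightarrow> (real \<Rightarrow> 'a::euclidean_space \<Rightarrow> 'a) \<Rightarrow> bool" where
  "L1_Cloc \<alpha> b \<longleftrightarrow>
     (\<lambda>p. b (fst p) (snd p)) \<in> borel_measurable borel \<and>
     (\<forall>K>0. (\<integral>\<^sup>+ t. holder_norm_ball \<alpha> K (b t) * indicator {0..1} t \<partial>lborel) < \<infinity>)"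

definition is_solution ::
  "(real \<Rightarrow> 'a::euclidean_space \<Rightarrow> 'a) \<Rightarrow> (real \<Rightarrow> 'a) \<Rightarrow> real \<Rightarrow> real \<Rightarrow> 'a \<Rightarrow> (real \<Rightarrow> 'a) \<Rightarrow> bool" where
  "is_solution b \<gamma> S T y z \<longleftrightarrow>
     (\<forall>t\<in>{S..T}. set_integrable lborel {S..t} (\<lambda>r. b r (z r)) \<and>
        z t = y + (LINT r:{S..t}|lborel. b r (z r)) + \<gamma> t - \<gamma> S)"

text \<open>Semiflow Phi s t x = Phi_{s->t}(x).\<close>
definition semiflow ::
  "(real \<Rightarrow> 'a::euclidean_space \<Rightarrow> 'a) \<Rightarrow> (real \<Rightarrow> 'a) \<Rightarrow> (real \<Rightarrow> real \<Rightarrow> 'a \<Rightarrow> 'a) \<Rightarrow> bool" where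
  "semiflow b \<gamma> \<Phi> \<longleftrightarrow>
     (\<lambda>p. \<Phi> (fst p) (fst (snd p)) (snd (snd p)))
        \<in> borel_measurable (restrict_space borel {p. 0 \<le> fst p \<and> fst p \<le> fst (snd p) \<and> fst (snd p) \<le> 1}) \<and>
     (\<forall>s x. 0 \<le> s \<and> s \<le> 1 \<longrightarrow> is_solution b \<gamma> s 1 x (\<lambda>t. \<Phi> s t x)) \<and>
     (\<forall>s r t x. 0 \<le> s \<and> s \<le> r \<and> r \<le> t \<and> t \<le> 1 \<longrightarrow> \<Phi> s t x = \<Phi> r t (\<Phi> s r x))"

definition loc_holder_semiflow :: "real \<Rightarrow> (real \<Rightarrow> real \<Rightarrow> 'a::euclidean_space \<Rightarrow> 'a) \<Rightarrow> bool" where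
  "loc_holder_semiflow \<beta> \<Phi> \<longleftrightarrow>
     (\<forall>K>0. \<exists>N. \<forall>s t x y. 0 \<le> s \<and> s \<le> t \<and> t \<le> 1 \<and> x \<in> cball 0 K \<and> y \<in> cball 0 K \<longrightarrow>
        norm (\<Phi> s t x - \<Phi> s t y) \<le> N * norm (x - y) powr \<beta>)"

end

theory Submission
  imports Defs
begin

text \<open>Let z be a solution on [S,T] and fix t. The curve \<open>r \<mapsto> \<Phi> r t (z r)\<close> runs from
  \<open>\<Phi> S t y\<close> to \<open>z t\<close>. On [s,r] the solution z and the flow line \<open>\<Phi> s \<cdot> (z s)\<close> start at
  the same point, so their distance is at most \<open>2 \<omega>\<close>, where \<open>\<omega>\<close> is the integral over [s,r]
  of the local Hoelder norm of b; fed back through the \<alpha>-Hoelder continuity of b, this improves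
  to \<open>\<omega> ^ (1 + \<alpha>)\<close>. Transported by the \<beta>-Hoelder map \<open>\<Phi> r t\<close>, the increments of the curve
  are of order \<open>\<omega> ^ (\<beta> (1 + \<alpha>))\<close>, an exponent above 1, so summing them over fine partitions
  shows that the curve is constant. Since the Hoelder norm of b need not be measurable in time,
  \<open>\<omega>\<close> is taken from a measurable minorant with the same (lower) integral.\<close>

lemma nn_integral_measurable_minorant:
  fixes f :: "'a \<Rightarrow> ennreal"
  obtains G where "G \<in> borel_measurable M" "\<And>x. G x \<le> f x" "nn_integral M G = nn_integral M f"
proof -
  let ?A = "{g. simple_function M g \<and> g \<le> f}"
  have "(\<lambda>_. 0) \<in> ?A" by (auto simp: le_fun_def)
  then have "?A \<noteq> {}" by blast
  then obtain u :: "nat \<Rightarrow> ennreal" where u: "range u \<subseteq> integral\<^sup>S M ` ?A"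
    "Sup (integral\<^sup>S M ` ?A) = Sup (range u)"
    using ennreal_SUP_countable_SUP[of ?A "integral\<^sup>S M"] by blast
  then have "\<forall>i. \<exists>g. g \<in> ?A \<and> u i = integral\<^sup>S M g" by blast
  then obtain g where g: "\<And>i. g i \<in> ?A" "\<And>i. u i = integral\<^sup>S M (g i)" by metis
  define G where "G x = (SUP i. g i x)" for x
  have "G \<in> borel_measurable M"
    unfolding G_def using g(1) by (intro borel_measurable_SUP) (auto intro: borel_measurable_simple_function)
  moreover have G_le: "G x \<le> f x" for x
    unfolding G_def using g(1) by (auto intro!: SUP_least simp: le_fun_def)
  moreover have "nn_integral M f \<le> nn_integral M G"
  proof -
    have "nn_integral M f = Sup (range u)" unfolding nn_integral_def using u(2) by simp
    also have "\<dots> \<le> nn_integral M G"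
    proof (rule SUP_least)
      fix i
      have "u i = nn_integral M (g i)" using g by (simp add: nn_integral_eq_simple_integral)
      also have "\<dots> \<le> nn_integral M G" unfolding G_def by (intro nn_integral_mono SUP_upper) auto
      finally show "u i \<le> nn_integral M G" .
    qed
    finally show ?thesis .
  qed
  moreover have "nn_integral M G \<le> nn_integral M f"
    using G_le by (intro nn_integral_mono)
  ultimately show thesis using that by (metis order_antisym)
qed

lemma nn_integral_le_measurable_minorant:
  fixes f G h :: "'a \<Rightarrow> ennreal"
  assumes G: "G \<in> borel_measurable M" "\<And>x. G x \<le> f x" "nn_integral M G = nn_integral M f"
    and fin: "nn_integral M f < \<infinity>"
    and A: "A \<in> sets M" and h: "h \<in> borel_measurable M" "\<And>x. h x \<le> f x * indicator A x"
  shows "nn_integral M h \<le> (\<integral>\<^sup>+x. G x * indicator A x \<partial>M)"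
proof -
  let ?GA = "\<lambda>x. G x * indicator A x" and ?GAc = "\<lambda>x. G x * indicator (space M - A) x"
  have "nn_integral M h + nn_integral M ?GAc = (\<integral>\<^sup>+x. h x + ?GAc x \<partial>M)"
    using A G h by (intro nn_integral_add[symmetric]) auto
  also have "\<dots> \<le> nn_integral M f"
  proof (intro nn_integral_mono)
    fix x
    show "h x + ?GAc x \<le> f x"
      using h(2)[of x] G(2)[of x] by (cases "x \<in> A") (auto simp: indicator_def)
  qed
  also have "\<dots> = (\<integral>\<^sup>+x. ?GA x + ?GAc x \<partial>M)"
    unfolding G(3)[symmetric] using sets.sets_into_space[OF A]
    by (intro nn_integral_cong) (auto simp: indicator_def)
  also have "\<dots> = nn_integral M ?GA + nn_integral M ?GAc"
    using A G by (intro nn_integral_add) auto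
  finally have le: "nn_integral M h + nn_integral M ?GAc \<le> nn_integral M ?GA + nn_integral M ?GAc" .
  have "nn_integral M ?GAc \<le> nn_integral M G"
    by (intro nn_integral_mono) (auto simp: indicator_def)
  then have "nn_integral M ?GAc < \<infinity>" using G(3) fin by simp
  with le show ?thesis
    by (metis add.commute ennreal_add_left_cancel_le less_irrefl)
qed

lemma set_integral_le_measurable_minorant:
  fixes f G :: "'a \<Rightarrow> ennreal" and h :: "'a \<Rightarrow> real"
  assumes G: "G \<in> borel_measurable M" "\<And>x. G x \<le> f x" "nn_integral M G = nn_integral M f"
    and fin: "nn_integral M f < \<infinity>" and A: "A \<in> sets M"
    and h: "set_integrable M A h" "\<And>x. x \<in> A \<Longrightarrow> 0 \<le> h x" "\<And>x. x \<in> A \<Longrightarrow> ennreal (h x) \<le> f x"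
  shows "(LINT x:A|M. h x) \<le> (LINT x:A|M. enn2real (G x))"
proof -
  have "(\<integral>\<^sup>+x. ennreal (enn2real (G x)) \<partial>M) \<le> nn_integral M G"
    by (intro nn_integral_mono) (simp add: ennreal_enn2real_if)
  then have "integrable M (\<lambda>x. enn2real (G x))"
    using G fin by (intro integrableI_nonneg) auto
  then have G_int: "integrable M (\<lambda>x. indicator A x *\<^sub>R enn2real (G x))"
    using A by (intro integrable_mult_indicator) auto
  have h_int: "integrable M (\<lambda>x. indicator A x *\<^sub>R h x)"
    using h(1) by (simp add: set_integrable_def)
  have G_fin: "AE x in M. G x \<noteq> \<infinity>"
    using G fin by (intro nn_integral_PInf_AE) auto
  have "ennreal (LINT x:A|M. h x) = (\<integral>\<^sup>+x. ennreal (indicator A x *\<^sub>R h x) \<partial>M)"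
    unfolding set_lebesgue_integral_def using h_int h(2)
    by (intro nn_integral_eq_integral[symmetric]) (auto simp: indicator_def)
  also have "\<dots> \<le> (\<integral>\<^sup>+x. G x * indicator A x \<partial>M)"
  proof (rule nn_integral_le_measurable_minorant[OF G fin A])
    show "(\<lambda>x. ennreal (indicator A x *\<^sub>R h x)) \<in> borel_measurable M"
      using borel_measurable_integrable[OF h_int] by simp
    show "ennreal (indicator A x *\<^sub>R h x) \<le> f x * indicator A x" for x
      using h(3)[of x] by (auto simp: indicator_def)
  qed
  also have "\<dots> = (\<integral>\<^sup>+x. ennreal (indicator A x *\<^sub>R enn2real (G x)) \<partial>M)"
    using G_fin by (intro nn_integral_cong_AE) (auto simp: indicator_def less_top)
  also have "\<dots> = ennreal (LINT x:A|M. enn2real (G x))"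
    unfolding set_lebesgue_integral_def using G_int by (intro nn_integral_eq_integral) auto
  finally show ?thesis
    unfolding set_lebesgue_integral_def by (subst (asm) ennreal_le_iff) (auto intro: integral_nonneg)
qed

text \<open>\<Psi> plays the role of a primitive of g when g, like the local Hoelder norm of the drift,
  is not known to be measurable.\<close>
definition integral_control :: "real \<Rightarrow> real \<Rightarrow> (real \<Rightarrow> ennreal) \<Rightarrow> (real \<Rightarrow> real) \<Rightarrow> bool" where
  "integral_control a b g \<Psi> \<longleftrightarrow> mono_on {a..b} \<Psi> \<and> continuous_on {a..b} \<Psi> \<and>
     (\<forall>s t h. a \<le> s \<and> s \<le> t \<and> t \<le> b \<and> set_integrable lborel {s..t} h \<and>
        (\<forall>x\<in>{s..t}. 0 \<le> h x \<and> ennreal (h x) \<le> g x) \<longrightarrow>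
        (LINT x:{s..t}|lborel. h x) \<le> \<Psi> t - \<Psi> s)"

lemma integral_control_mono:
  "integral_control a b g \<Psi> \<Longrightarrow> a \<le> s \<Longrightarrow> s \<le> t \<Longrightarrow> t \<le> b \<Longrightarrow> \<Psi> s \<le> \<Psi> t"
  unfolding integral_control_def by (auto intro: mono_onD)

lemma integral_control_le:
  assumes \<Psi>: "integral_control a b g \<Psi>" and st: "a \<le> s" "s \<le> t" "t \<le> b" and "0 \<le> c"
    and h: "set_integrable lborel {s..t} h"
      "\<And>x. x \<in> {s..t} \<Longrightarrow> 0 \<le> h x" "\<And>x. x \<in> {s..t} \<Longrightarrow> ennreal (h x) \<le> ennreal c * g x"
  shows "(LINT x:{s..t}|lborel. h x) \<le> c * (\<Psi> t - \<Psi> s)"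
proof (cases "c = 0")
  case True
  then have "(LINT x:{s..t}|lborel. h x) = (LINT x:{s..t}|lborel. 0)"
    using h by (intro set_lebesgue_integral_cong) (auto simp: ennreal_eq_0_iff intro: order.antisym)
  then show ?thesis using True by simp
next
  case False
  have "0 \<le> h x / c \<and> ennreal (h x / c) \<le> g x" if "x \<in> {s..t}" for x
  proof -
    have "ennreal c * ennreal (h x / c) = ennreal (h x)"
      using False \<open>0 \<le> c\<close> h(2)[OF that] by (simp add: ennreal_mult[symmetric])
    also have "\<dots> \<le> ennreal c * g x" using h(3)[OF that] .
    finally show ?thesis using False \<open>0 \<le> c\<close> h(2)[OF that] by (simp add: ennreal_mult_le_mult_iff)
  qed
  moreover have "set_integrable lborel {s..t} (\<lambda>x. h x / c)" using h(1) by simp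
  ultimately have "(LINT x:{s..t}|lborel. h x / c) \<le> \<Psi> t - \<Psi> s"
    using \<Psi> st unfolding integral_control_def by blast
  then show ?thesis using False \<open>0 \<le> c\<close> by (simp add: divide_le_eq mult.commute)
qed

lemma integral_control_exists:
  assumes fin: "(\<integral>\<^sup>+x. g x * indicator {a..b} x \<partial>lborel) < \<infinity>"
  obtains \<Psi> where "integral_control a b g \<Psi>"
proof -
  define f where "f x = g x * indicator {a..b} x" for x
  obtain G where G: "G \<in> borel_measurable lborel" "\<And>x. G x \<le> f x" "nn_integral lborel G = nn_integral lborel f"
    using nn_integral_measurable_minorant by blast
  have f_fin: "nn_integral lborel f < \<infinity>" using fin unfolding f_def .
  define H where "H x = enn2real (G x)" for x
  have "(\<integral>\<^sup>+x. ennreal (H x) \<partial>lborel) \<le> nn_integral lborel G"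
    unfolding H_def by (intro nn_integral_mono) (simp add: ennreal_enn2real_if)
  then have "integrable lborel H"
    using G f_fin unfolding H_def by (intro integrableI_nonneg) auto
  then have H_set: "set_integrable lborel {s..t} H" for s t
    unfolding set_integrable_def by (intro integrable_mult_indicator) auto
  define \<Psi> where "\<Psi> t = integral {a..t} H" for t
  have \<Psi>_diff: "\<Psi> t - \<Psi> s = (LINT x:{s..t}|lborel. H x)" if "a \<le> s" "s \<le> t" for s t
    using Henstock_Kurzweil_Integration.integral_combine[OF that set_borel_integral_eq_integral(1)[OF H_set]]
      set_borel_integral_eq_integral(2)[OF H_set]
    unfolding \<Psi>_def by (simp add: algebra_simps)
  have below_g: "(LINT x:{s..t}|lborel. h x) \<le> \<Psi> t - \<Psi> s"
    if "a \<le> s" "s \<le> t" "t \<le> b" "set_integrable lborel {s..t} h"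
      "\<forall>x\<in>{s..t}. 0 \<le> h x \<and> ennreal (h x) \<le> g x" for s t h
    unfolding \<Psi>_diff[OF that(1,2)] H_def using that
    by (intro set_integral_le_measurable_minorant[OF G f_fin]) (auto simp: f_def)
  moreover have "mono_on {a..b} \<Psi>"
    using below_g[where h = "\<lambda>_. 0"] by (intro mono_onI) (auto simp: set_integrable_def)
  moreover have "continuous_on {a..b} \<Psi>"
    unfolding \<Psi>_def using set_borel_integral_eq_integral(1)[OF H_set]
    by (rule indefinite_integral_continuous_1)
  ultimately show thesis
    using that unfolding integral_control_def by blast
qed

lemma norm_diff_le_control_if_small_steps:
  fixes F :: "real \<Rightarrow> 'a::real_normed_vector"
  assumes \<Psi>: "continuous_on {a..b} \<Psi>" "mono_on {a..b} \<Psi>" and "a \<le> b" "0 < \<eta>"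
    and step: "\<And>s t. a \<le> s \<Longrightarrow> s \<le> t \<Longrightarrow> t \<le> b \<Longrightarrow> \<Psi> t - \<Psi> s \<le> \<eta> \<Longrightarrow>
      norm (F t - F s) \<le> C * (\<Psi> t - \<Psi> s)"
  shows "norm (F b - F a) \<le> C * (\<Psi> b - \<Psi> a)"
proof -
  obtain d where d: "d > 0" "\<And>x x'. x \<in> {a..b} \<Longrightarrow> x' \<in> {a..b} \<Longrightarrow> dist x' x < d \<Longrightarrow> dist (\<Psi> x') (\<Psi> x) < \<eta>"
    using compact_uniformly_continuous[OF \<Psi>(1)] \<open>0 < \<eta>\<close> unfolding uniformly_continuous_on_def
    by (metis compact_Icc)
  obtain n :: nat where n: "(b - a) / d < real n" using reals_Archimedean2 by blast
  have "0 \<le> (b - a) / d" using \<open>a \<le> b\<close> d(1) by simp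
  then have "0 < n" using n by linarith
  define u where "u i = a + real i * (b - a) / real n" for i
  have u_end: "u 0 = a" "u n = b" using \<open>0 < n\<close> by (auto simp: u_def)
  have u_Suc: "u (Suc i) = u i + (b - a) / real n" for i
    by (simp add: u_def add_divide_distrib distrib_right)
  have mesh: "(b - a) / real n < d"
    using n \<open>0 < n\<close> d(1) by (simp add: pos_divide_less_eq mult.commute)
  have u_range: "u i \<in> {a..b}" if "i \<le> n" for i
  proof -
    have "real i * (b - a) / real n \<le> real n * (b - a) / real n"
      using that \<open>a \<le> b\<close> by (intro divide_right_mono mult_right_mono) auto
    then show ?thesis using \<open>0 < n\<close> \<open>a \<le> b\<close> by (simp add: u_def)
  qed
  have "norm (F (u (Suc i)) - F (u i)) \<le> C * (\<Psi> (u (Suc i)) - \<Psi> (u i))" if "i < n" for i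
  proof (rule step)
    have "dist (u (Suc i)) (u i) < d" using u_Suc[of i] mesh \<open>a \<le> b\<close> by (simp add: dist_real_def)
    then show "\<Psi> (u (Suc i)) - \<Psi> (u i) \<le> \<eta>"
      using d(2) u_range[of i] u_range[of "Suc i"] that by (force simp: dist_real_def)
  qed (use u_range[of i] u_range[of "Suc i"] u_Suc[of i] \<open>a \<le> b\<close> that in auto)
  then have "norm (\<Sum>i<n. F (u (Suc i)) - F (u i)) \<le> (\<Sum>i<n. C * (\<Psi> (u (Suc i)) - \<Psi> (u i)))"
    by (intro order.trans[OF norm_sum] sum_mono) auto
  then show ?thesis
    using sum_lessThan_telescope[of "\<lambda>i. F (u i)" n] sum_lessThan_telescope[of "\<lambda>i. \<Psi> (u i)" n]
    by (simp add: sum_distrib_left[symmetric] u_end)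
qed

lemma eq_if_norm_diff_le_control_powr:
  fixes F :: "real \<Rightarrow> 'a::real_normed_vector"
  assumes \<Psi>: "continuous_on {a..b} \<Psi>" "mono_on {a..b} \<Psi>" and "a \<le> b" "1 < p" "0 \<le> C"
    and incr: "\<And>s t. a \<le> s \<Longrightarrow> s \<le> t \<Longrightarrow> t \<le> b \<Longrightarrow> norm (F t - F s) \<le> C * (\<Psi> t - \<Psi> s) powr p"
  shows "F b = F a"
proof -
  define M where "M = \<Psi> b - \<Psi> a"
  have "0 \<le> M" using mono_onD[OF \<Psi>(2)] \<open>a \<le> b\<close> by (simp add: M_def)
  have small: "norm (F b - F a) \<le> C * \<eta> powr (p - 1) * M" if "0 < \<eta>" for \<eta>
    unfolding M_def
  proof (rule norm_diff_le_control_if_small_steps[OF \<Psi> \<open>a \<le> b\<close> \<open>0 < \<eta>\<close>])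
    fix s t assume st: "a \<le> s" "s \<le> t" "t \<le> b" "\<Psi> t - \<Psi> s \<le> \<eta>"
    define W where "W = \<Psi> t - \<Psi> s"
    have "0 \<le> W" using mono_onD[OF \<Psi>(2)] st by (simp add: W_def)
    have "W powr p = W powr (p - 1) * W"
      using \<open>0 \<le> W\<close> \<open>1 < p\<close> by (cases "W = 0") (simp_all add: powr_diff)
    also have "\<dots> \<le> \<eta> powr (p - 1) * W"
      using \<open>0 \<le> W\<close> \<open>1 < p\<close> st by (intro mult_right_mono powr_mono2) (auto simp: W_def)
    finally show "norm (F t - F s) \<le> C * \<eta> powr (p - 1) * W"
      using incr[OF st(1-3)] \<open>0 \<le> C\<close> unfolding W_def[symmetric]
      by (metis mult.assoc mult_left_mono order.trans)
  qed
  have "norm (F b - F a) \<le> 0 + e" if "0 < e" for e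
  proof -
    define \<eta> where "\<eta> = (e / (C * M + 1)) powr (1 / (p - 1))"
    have pos: "0 < C * M + 1" using \<open>0 \<le> C\<close> \<open>0 \<le> M\<close> by (simp add: add_nonneg_pos)
    then have "\<eta> powr (p - 1) = e / (C * M + 1)"
      using \<open>0 < e\<close> \<open>1 < p\<close> by (simp add: \<eta>_def powr_powr)
    then have "C * \<eta> powr (p - 1) * M = e * (C * M / (C * M + 1))" by simp
    also have "\<dots> \<le> e" using pos \<open>0 < e\<close> by (intro mult_left_le) auto
    finally show ?thesis using small[of \<eta>] pos \<open>0 < e\<close> by (simp add: \<eta>_def)
  qed
  then show ?thesis using field_le_epsilon[of "norm (F b - F a)" 0] by simp
qed

lemma is_solution_integrable:
  "is_solution b \<gamma> S T y z \<Longrightarrow> S \<le> t \<Longrightarrow> t \<le> T \<Longrightarrow> set_integrable lborel {S..t} (\<lambda>r. b r (z r))"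
  unfolding is_solution_def by auto

lemma is_solution_eq:
  "is_solution b \<gamma> S T y z \<Longrightarrow> S \<le> t \<Longrightarrow> t \<le> T \<Longrightarrow>
    z t = y + (LINT r:{S..t}|lborel. b r (z r)) + \<gamma> t - \<gamma> S"
  unfolding is_solution_def by auto

lemma is_solution_initial:
  assumes "is_solution b \<gamma> S T y z" "S \<le> T"
  shows "z S = y"
  using is_solution_eq[OF assms(1) order_refl assms(2)]
    set_borel_integral_eq_integral(2)[OF is_solution_integrable[OF assms(1) order_refl assms(2)]]
  by simp

lemma is_solution_restrict:
  assumes z: "is_solution b \<gamma> S T y z" and "S \<le> s" "s \<le> t" "t \<le> T"
  shows "is_solution b \<gamma> s t (z s) z"
  unfolding is_solution_def
proof
  fix r assume r: "r \<in> {s..t}"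
  let ?I = "\<lambda>u v. integral {u..v} (\<lambda>r. b r (z r))"
  have int: "set_integrable lborel {S..v} (\<lambda>r. b r (z r))" if "v \<in> {S..T}" for v
    using is_solution_integrable[OF z] that by auto
  have eq: "z v = y + ?I S v + \<gamma> v - \<gamma> S" if "v \<in> {S..T}" for v
    using is_solution_eq[OF z] set_borel_integral_eq_integral(2)[OF int[OF that]] that by auto
  have int_sr: "set_integrable lborel {s..r} (\<lambda>r. b r (z r))"
    using r assms by (intro set_integrable_subset[OF int[of r]]) auto
  have rs: "r \<in> {S..T}" "s \<in> {S..T}" using r assms by auto
  have "?I S r = ?I S s + ?I s r"
    using r assms set_borel_integral_eq_integral(1)[OF int[of r]]
    by (intro Henstock_Kurzweil_Integration.integral_combine[symmetric]) auto
  then have "z r - z s = ?I s r + \<gamma> r - \<gamma> s"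
    unfolding eq[OF rs(1)] eq[OF rs(2)] by (simp add: algebra_simps)
  then have "z r = z s + ?I s r + \<gamma> r - \<gamma> s"
    by (simp add: algebra_simps eq_diff_eq)
  then show "set_integrable lborel {s..r} (\<lambda>r. b r (z r)) \<and>
      z r = z s + (LINT r:{s..r}|lborel. b r (z r)) + \<gamma> r - \<gamma> s"
    using int_sr set_borel_integral_eq_integral(2)[OF int_sr] by simp
qed

lemma set_integral_mono_set_nonneg:
  fixes f :: "'a \<Rightarrow> real"
  assumes "set_integrable M B f" "A \<in> sets M" "A \<subseteq> B" "\<And>x. x \<in> B \<Longrightarrow> 0 \<le> f x"
  shows "(LINT x:A|M. f x) \<le> (LINT x:B|M. f x)"
  unfolding set_lebesgue_integral_def
  using assms set_integrable_subset[OF assms(1-3)]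
  by (intro integral_mono) (auto simp: set_integrable_def indicator_def)

lemma is_solution_bounded:
  assumes z: "is_solution b \<gamma> S T y z" and "bounded (\<gamma> ` {S..T})"
  shows "bounded (z ` {S..T})"
proof -
  obtain B where B: "\<forall>t\<in>{S..T}. norm (\<gamma> t) \<le> B"
    using assms(2) unfolding bounded_iff by auto
  let ?L = "LINT r:{S..T}|lborel. norm (b r (z r))"
  have "norm (z t) \<le> norm y + ?L + 2 * B" if t: "t \<in> {S..T}" for t
  proof -
    have "norm (LINT r:{S..t}|lborel. b r (z r)) \<le> (LINT r:{S..t}|lborel. norm (b r (z r)))"
      using is_solution_integrable[OF z] t by (intro set_integral_norm_bound) auto
    also have "\<dots> \<le> ?L"
      using is_solution_integrable[OF z, of T] t
      by (intro set_integral_mono_set_nonneg set_integrable_norm) auto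
    finally show ?thesis
      using is_solution_eq[OF z, of t] B t
      by (smt (verit) norm_triangle_ineq norm_triangle_ineq4 atLeastAtMost_iff)
  qed
  then show ?thesis unfolding bounded_iff by blast
qed

lemma is_solutions_diff_le:
  assumes z: "is_solution b \<gamma> s t x z" and w: "is_solution b \<gamma> s t x w" and r: "r \<in> {s..t}"
  shows "norm (z r - w r) \<le> (LINT u:{s..r}|lborel. norm (b u (z u) - b u (w u)))"
proof -
  have zi: "set_integrable lborel {s..r} (\<lambda>u. b u (z u))"
    and wi: "set_integrable lborel {s..r} (\<lambda>u. b u (w u))"
    using is_solution_integrable[OF z] is_solution_integrable[OF w] r by auto
  have "z r - w r = (LINT u:{s..r}|lborel. b u (z u) - b u (w u))"
    using is_solution_eq[OF z] is_solution_eq[OF w] r set_integral_diff(2)[OF zi wi] by auto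
  then show ?thesis
    using set_integral_norm_bound set_integral_diff(1)[OF zi wi] by metis
qed

lemma semiflow_is_solution:
  assumes "semiflow b \<gamma> \<Phi>" "0 \<le> s" "s \<le> t" "t \<le> 1"
  shows "is_solution b \<gamma> s t x (\<lambda>r. \<Phi> s r x)"
proof -
  have sol: "is_solution b \<gamma> s 1 x (\<lambda>r. \<Phi> s r x)"
    using assms unfolding semiflow_def by auto
  show ?thesis
    using is_solution_restrict[OF sol order_refl assms(3,4)] is_solution_initial[OF sol] assms by simp
qed

lemma semiflow_initial: "semiflow b \<gamma> \<Phi> \<Longrightarrow> 0 \<le> s \<Longrightarrow> s \<le> 1 \<Longrightarrow> \<Phi> s s x = x"
  using is_solution_initial[OF semiflow_is_solution] by blast

lemma semiflow_comp:
  "semiflow b \<gamma> \<Phi> \<Longrightarrow> 0 \<le> s \<Longrightarrow> s \<le> r \<Longrightarrow> r \<le> t \<Longrightarrow> t \<le> 1 \<Longrightarrow> \<Phi> s t x = \<Phi> r t (\<Phi> s r x)"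
  unfolding semiflow_def by blast

lemma loc_holder_semiflowE:
  assumes "loc_holder_semiflow \<beta> \<Phi>" "0 < K"
  obtains N where "\<And>s t x y. 0 \<le> s \<Longrightarrow> s \<le> t \<Longrightarrow> t \<le> 1 \<Longrightarrow> x \<in> cball 0 K \<Longrightarrow> y \<in> cball 0 K \<Longrightarrow>
    norm (\<Phi> s t x - \<Phi> s t y) \<le> N * norm (x - y) powr \<beta>"
  using assms unfolding loc_holder_semiflow_def by meson

text \<open>Compare with the orbit of the origin: \<Phi> s t x and \<Phi> 0 t 0 = \<Phi> s t (\<Phi> 0 s 0) are
  Hoelder-close, and that orbit is a bounded solution.\<close>
lemma semiflow_bounded:
  assumes \<Phi>: "semiflow b \<gamma> \<Phi>" "loc_holder_semiflow \<beta> \<Phi>" and "0 \<le> \<beta>"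
    and \<gamma>: "bounded (\<gamma> ` {0..1})"
  shows "bounded {\<Phi> s t x | s t x. 0 \<le> s \<and> s \<le> t \<and> t \<le> 1 \<and> x \<in> cball 0 R}"
proof -
  have "bounded ((\<lambda>t. \<Phi> 0 t 0) ` {0..1})"
    using is_solution_bounded[OF semiflow_is_solution[OF \<Phi>(1)] \<gamma>] by simp
  then obtain K0 where K0: "\<forall>t\<in>{0..1}. norm (\<Phi> 0 t 0) \<le> K0"
    unfolding bounded_iff by auto
  define K where "K = \<bar>R\<bar> + \<bar>K0\<bar> + 1"
  obtain N where N: "\<And>s t x y. 0 \<le> s \<Longrightarrow> s \<le> t \<Longrightarrow> t \<le> 1 \<Longrightarrow> x \<in> cball 0 K \<Longrightarrow> y \<in> cball 0 K \<Longrightarrow>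
      norm (\<Phi> s t x - \<Phi> s t y) \<le> N * norm (x - y) powr \<beta>"
    using loc_holder_semiflowE[OF \<Phi>(2), of K] by (auto simp: K_def add_nonneg_pos)
  have "norm (\<Phi> s t x) \<le> K0 + \<bar>N\<bar> * (2 * K) powr \<beta>"
    if st: "0 \<le> s" "s \<le> t" "t \<le> 1" and x: "x \<in> cball 0 R" for s t x
  proof -
    have x0: "x \<in> cball 0 K" "\<Phi> 0 s 0 \<in> cball 0 K"
      using x K0[rule_format, of s] st by (auto simp: K_def)
    have "norm (\<Phi> s t x - \<Phi> 0 t 0) = norm (\<Phi> s t x - \<Phi> s t (\<Phi> 0 s 0))"
      using semiflow_comp[OF \<Phi>(1), of 0 s t 0] st by simp
    also have "\<dots> \<le> \<bar>N\<bar> * norm (x - \<Phi> 0 s 0) powr \<beta>"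
      using N[OF st x0] by (meson abs_ge_self mult_right_mono order.trans powr_ge_zero)
    also have "\<dots> \<le> \<bar>N\<bar> * (2 * K) powr \<beta>"
      using x0 \<open>0 \<le> \<beta>\<close> norm_triangle_ineq4[of x "\<Phi> 0 s 0"]
      by (intro mult_left_mono powr_mono2) auto
    finally show ?thesis
      using K0[rule_format, of t] st norm_triangle_ineq2[of "\<Phi> s t x" "\<Phi> 0 t 0"] by auto
  qed
  then show ?thesis unfolding bounded_iff by blast
qed

lemma holder_norm_ball_norm_le:
  "x \<in> cball 0 K \<Longrightarrow> ennreal (norm (f x)) \<le> holder_norm_ball \<alpha> K f"
  unfolding holder_norm_ball_def by (intro add_increasing2 SUP_upper) auto

lemma holder_norm_ball_diff_le:
  assumes "x \<in> cball 0 K" "y \<in> cball 0 K"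
  shows "ennreal (norm (f x - f y)) \<le> holder_norm_ball \<alpha> K f * ennreal (norm (x - y) powr \<alpha>)"
proof (cases "x = y")
  case False
  let ?q = "norm (f x - f y) / norm (x - y) powr \<alpha>"
  have "ennreal ?q \<le> holder_norm_ball \<alpha> K f"
    unfolding holder_norm_ball_def using assms False
    by (intro add_increasing SUP_upper2[of "(x, y)"]) auto
  moreover have "ennreal (norm (f x - f y)) = ennreal ?q * ennreal (norm (x - y) powr \<alpha>)"
    using False by (simp add: ennreal_mult[symmetric])
  ultimately show ?thesis by (simp add: mult_right_mono)
qed simp

lemma is_solutions_diff_le_control:
  assumes z: "is_solution b \<gamma> s t x z" and w: "is_solution b \<gamma> s t x w"
    and ball: "\<And>r. r \<in> {s..t} \<Longrightarrow> z r \<in> cball 0 K \<and> w r \<in> cball 0 K"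
    and \<Psi>: "integral_control t0 t1 (\<lambda>r. holder_norm_ball \<alpha> K (b r)) \<Psi>" "t0 \<le> s" "t \<le> t1"
    and "s \<le> t" "0 \<le> \<alpha>"
  shows "norm (z t - w t) \<le> (2 * (\<Psi> t - \<Psi> s)) powr \<alpha> * (\<Psi> t - \<Psi> s)"
proof -
  define k where "k = (\<lambda>u. norm (b u (z u) - b u (w u)))"
  have k_int: "set_integrable lborel {s..r} k" if "r \<in> {s..t}" for r
    unfolding k_def using is_solution_integrable[OF z] is_solution_integrable[OF w] that
    by (intro set_integrable_norm set_integral_diff(1)) auto
  have dev: "norm (z r - w r) \<le> (LINT u:{s..r}|lborel. k u)" if "r \<in> {s..t}" for r
    unfolding k_def using is_solutions_diff_le[OF z w that] .
  have crude: "norm (z r - w r) \<le> 2 * (\<Psi> t - \<Psi> s)" if r: "r \<in> {s..t}" for r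
  proof -
    have "(LINT u:{s..r}|lborel. k u) \<le> 2 * (\<Psi> r - \<Psi> s)"
    proof (rule integral_control_le[OF \<Psi>(1)])
      fix u assume u: "u \<in> {s..r}"
      have "ennreal (k u) \<le> ennreal (norm (b u (z u)) + norm (b u (w u)))"
        unfolding k_def by (intro ennreal_leI norm_triangle_ineq4)
      also have "\<dots> = ennreal (norm (b u (z u))) + ennreal (norm (b u (w u)))"
        by (simp add: ennreal_plus)
      also have "\<dots> \<le> ennreal 2 * holder_norm_ball \<alpha> K (b u)"
        using ball[of u] u r unfolding ennreal_numeral mult_2
        by (intro add_mono holder_norm_ball_norm_le) auto
      finally show "ennreal (k u) \<le> ennreal 2 * holder_norm_ball \<alpha> K (b u)" .
    qed (use r \<Psi> k_int[OF r] in \<open>auto simp: k_def\<close>)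
    also have "\<dots> \<le> 2 * (\<Psi> t - \<Psi> s)"
      using integral_control_mono[OF \<Psi>(1), of r t] r \<Psi> by auto
    finally show ?thesis using dev[OF r] by simp
  qed
  have "(LINT u:{s..t}|lborel. k u) \<le> (2 * (\<Psi> t - \<Psi> s)) powr \<alpha> * (\<Psi> t - \<Psi> s)"
  proof (rule integral_control_le[OF \<Psi>(1)])
    fix u assume u: "u \<in> {s..t}"
    have "ennreal (k u) \<le> holder_norm_ball \<alpha> K (b u) * ennreal (norm (z u - w u) powr \<alpha>)"
      unfolding k_def using ball[OF u] by (intro holder_norm_ball_diff_le) auto
    also have "\<dots> \<le> holder_norm_ball \<alpha> K (b u) * ennreal ((2 * (\<Psi> t - \<Psi> s)) powr \<alpha>)"
      using crude[OF u] \<open>0 \<le> \<alpha>\<close> by (intro mult_left_mono ennreal_leI powr_mono2) auto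
    finally show "ennreal (k u) \<le> ennreal ((2 * (\<Psi> t - \<Psi> s)) powr \<alpha>) * holder_norm_ball \<alpha> K (b u)"
      by (simp add: mult.commute)
  qed (use \<Psi> k_int[of t] \<open>s \<le> t\<close> in \<open>auto simp: k_def\<close>)
  then show ?thesis using dev[of t] \<open>s \<le> t\<close> by auto
qed

lemma semiflow_solution_bounded:
  fixes \<gamma> :: "real \<Rightarrow> 'a::euclidean_space"
  assumes \<gamma>: "bounded (\<gamma> ` {0..1})" and \<Phi>: "semiflow b \<gamma> \<Phi>" "loc_holder_semiflow \<beta> \<Phi>" "0 \<le> \<beta>"
    and z: "is_solution b \<gamma> S T y z" and ST: "0 \<le> S" "T \<le> 1"
  obtains K where "0 < K" "\<And>r. r \<in> {S..T} \<Longrightarrow> z r \<in> cball 0 K"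
    "\<And>s r. S \<le> s \<Longrightarrow> s \<le> r \<Longrightarrow> r \<le> T \<Longrightarrow> \<Phi> s r (z s) \<in> cball 0 K"
proof -
  have "\<gamma> ` {S..T} \<subseteq> \<gamma> ` {0..1}" using ST by (intro image_mono) auto
  then have "bounded (z ` {S..T})"
    using is_solution_bounded[OF z] bounded_subset[OF \<gamma>] by blast
  then obtain R where R: "\<forall>r\<in>{S..T}. z r \<in> cball 0 R"
    unfolding bounded_iff by auto
  let ?flow = "{\<Phi> s r x | s r x. 0 \<le> s \<and> s \<le> r \<and> r \<le> 1 \<and> x \<in> cball 0 R}"
  have "bounded (z ` {S..T} \<union> ?flow)"
    using \<open>bounded (z ` {S..T})\<close> semiflow_bounded[OF \<Phi> \<gamma>] by simp
  then obtain K where "0 < K" and K: "\<forall>x \<in> z ` {S..T} \<union> ?flow. norm x \<le> K"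
    unfolding bounded_pos by blast
  moreover have "\<Phi> s r (z s) \<in> ?flow" if "S \<le> s" "s \<le> r" "r \<le> T" for s r
    using R that ST by fastforce
  ultimately show thesis
    using that by auto
qed

lemma semiflow_along_solution_increment_le:
  fixes \<gamma> :: "real \<Rightarrow> 'a::euclidean_space"
  assumes \<Phi>: "semiflow b \<gamma> \<Phi>" "loc_holder_semiflow \<beta> \<Phi>" "0 \<le> \<beta>" and "0 \<le> \<alpha>"
    and z: "is_solution b \<gamma> S T y z" and ST: "0 \<le> S" "T \<le> 1" and "0 < K"
    and K: "\<And>r. r \<in> {S..T} \<Longrightarrow> z r \<in> cball 0 K"
      "\<And>s r. S \<le> s \<Longrightarrow> s \<le> r \<Longrightarrow> r \<le> T \<Longrightarrow> \<Phi> s r (z s) \<in> cball 0 K"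
    and \<Psi>: "integral_control 0 1 (\<lambda>r. holder_norm_ball \<alpha> K (b r)) \<Psi>" and "t \<le> T"
  obtains C where "0 \<le> C" "\<And>s r. S \<le> s \<Longrightarrow> s \<le> r \<Longrightarrow> r \<le> t \<Longrightarrow>
    norm (\<Phi> r t (z r) - \<Phi> s t (z s)) \<le> C * (\<Psi> r - \<Psi> s) powr (\<beta> * (1 + \<alpha>))"
proof -
  obtain N where N: "\<And>s r x y. 0 \<le> s \<Longrightarrow> s \<le> r \<Longrightarrow> r \<le> 1 \<Longrightarrow> x \<in> cball 0 K \<Longrightarrow> y \<in> cball 0 K \<Longrightarrow>
      norm (\<Phi> s r x - \<Phi> s r y) \<le> N * norm (x - y) powr \<beta>"
    using loc_holder_semiflowE[OF \<Phi>(2) \<open>0 < K\<close>] by blast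
  have incr: "norm (\<Phi> r t (z r) - \<Phi> s t (z s)) \<le> \<bar>N\<bar> * 2 powr (\<alpha> * \<beta>) * (\<Psi> r - \<Psi> s) powr (\<beta> * (1 + \<alpha>))"
    if sr: "S \<le> s" "s \<le> r" "r \<le> t" for s r
  proof -
    define W where "W = \<Psi> r - \<Psi> s"
    have "0 \<le> W" using integral_control_mono[OF \<Psi>] sr ST \<open>t \<le> T\<close> by (auto simp: W_def)
    have dev: "norm (z r - \<Phi> s r (z s)) \<le> (2 * W) powr \<alpha> * W"
      unfolding W_def
    proof (rule is_solutions_diff_le_control[OF _ _ _ \<Psi>])
      show "is_solution b \<gamma> s r (z s) z"
        using is_solution_restrict[OF z] sr \<open>t \<le> T\<close> by auto
      show "is_solution b \<gamma> s r (z s) (\<lambda>u. \<Phi> s u (z s))"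
        using semiflow_is_solution[OF \<Phi>(1)] sr \<open>t \<le> T\<close> ST by auto
    qed (use K sr \<open>t \<le> T\<close> ST \<open>0 \<le> \<alpha>\<close> in auto)
    have "\<Phi> s t (z s) = \<Phi> r t (\<Phi> s r (z s))"
      using semiflow_comp[OF \<Phi>(1), of s r t "z s"] sr ST \<open>t \<le> T\<close> by auto
    then have "norm (\<Phi> r t (z r) - \<Phi> s t (z s)) \<le> \<bar>N\<bar> * norm (z r - \<Phi> s r (z s)) powr \<beta>"
      using N[of r t "z r" "\<Phi> s r (z s)"] K(1)[of r] K(2)[of s r] sr ST \<open>t \<le> T\<close>
      by (force intro: order.trans mult_right_mono)
    also have "\<dots> \<le> \<bar>N\<bar> * ((2 * W) powr \<alpha> * W) powr \<beta>"
      using dev \<open>0 \<le> \<beta>\<close> by (intro mult_left_mono powr_mono2) auto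
    also have "((2 * W) powr \<alpha> * W) powr \<beta> = 2 powr (\<alpha> * \<beta>) * W powr (\<beta> * (1 + \<alpha>))"
      using \<open>0 \<le> W\<close> by (cases "W = 0") (simp_all add: powr_mult powr_powr powr_add algebra_simps)
    finally show ?thesis by (simp add: W_def mult.assoc)
  qed
  show thesis
  proof (rule that)
    show "0 \<le> \<bar>N\<bar> * 2 powr (\<alpha> * \<beta>)" by simp
  qed (fact incr)
qed

lemma semiflow_solution_unique:
  fixes \<gamma> :: "real \<Rightarrow> 'a::euclidean_space"
  assumes \<gamma>: "bounded (\<gamma> ` {0..1})" and b: "L1_Cloc \<alpha> b" "0 \<le> \<alpha>"
    and \<Phi>: "semiflow b \<gamma> \<Phi>" "loc_holder_semiflow \<beta> \<Phi>" and p: "\<beta> * (1 + \<alpha>) > 1"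
    and ST: "0 \<le> S" "T \<le> 1" and z: "is_solution b \<gamma> S T y z" and t: "t \<in> {S..T}"
  shows "z t = \<Phi> S t y"
proof -
  have "0 < \<beta> * (1 + \<alpha>)" using p by linarith
  then have "0 \<le> \<beta>" using \<open>0 \<le> \<alpha>\<close> by (simp add: zero_less_mult_iff)
  obtain K where K: "0 < K" "\<And>r. r \<in> {S..T} \<Longrightarrow> z r \<in> cball 0 K"
      "\<And>s r. S \<le> s \<Longrightarrow> s \<le> r \<Longrightarrow> r \<le> T \<Longrightarrow> \<Phi> s r (z s) \<in> cball 0 K"
    using semiflow_solution_bounded[OF \<gamma> \<Phi> \<open>0 \<le> \<beta>\<close> z ST] by blast
  obtain \<Psi> where \<Psi>: "integral_control 0 1 (\<lambda>r. holder_norm_ball \<alpha> K (b r)) \<Psi>"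
    using integral_control_exists[of "\<lambda>r. holder_norm_ball \<alpha> K (b r)" 0 1] b \<open>0 < K\<close>
    unfolding L1_Cloc_def by blast
  obtain C where "0 \<le> C" and C: "\<And>s r. S \<le> s \<Longrightarrow> s \<le> r \<Longrightarrow> r \<le> t \<Longrightarrow>
      norm (\<Phi> r t (z r) - \<Phi> s t (z s)) \<le> C * (\<Psi> r - \<Psi> s) powr (\<beta> * (1 + \<alpha>))"
    using semiflow_along_solution_increment_le[OF \<Phi> \<open>0 \<le> \<beta>\<close> \<open>0 \<le> \<alpha>\<close> z ST K \<Psi>] t by auto
  have "{S..t} \<subseteq> {0..1}" using t ST by auto
  then have "continuous_on {S..t} \<Psi>" "mono_on {S..t} \<Psi>"
    using \<Psi> continuous_on_subset mono_on_subset unfolding integral_control_def by metis+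
  then have "\<Phi> t t (z t) = \<Phi> S t (z S)"
    using eq_if_norm_diff_le_control_powr[where F = "\<lambda>r. \<Phi> r t (z r)", OF _ _ _ p \<open>0 \<le> C\<close> C] t
    by auto
  then show ?thesis
    using semiflow_initial[OF \<Phi>(1)] is_solution_initial[OF z] t ST by auto
qed

theorem lemma4p5:
  fixes \<gamma> :: "real \<Rightarrow> 'a::euclidean_space"
    and b :: "real \<Rightarrow> 'a \<Rightarrow> 'a"
    and \<Phi> :: "real \<Rightarrow> real \<Rightarrow> 'a \<Rightarrow> 'a"
    and \<alpha> \<beta> :: real
  assumes "\<gamma> \<in> borel_measurable (restrict_space borel {0..1})"
    and "bounded (\<gamma> ` {0..1})"
    and "0 < \<alpha>" "\<alpha> \<le> 1"
    and "L1_Cloc \<alpha> b"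
    and "semiflow b \<gamma> \<Phi>"
    and "loc_holder_semiflow \<beta> \<Phi>"
    and "\<beta> * (1 + \<alpha>) > 1"
    and "0 \<le> S" "S \<le> T" "T \<le> 1"
  shows "is_solution b \<gamma> S T y (\<lambda>t. \<Phi> S t y) \<and>
         (\<forall>z. is_solution b \<gamma> S T y z \<longrightarrow> (\<forall>t\<in>{S..T}. z t = \<Phi> S t y))"
  using semiflow_is_solution[OF assms(6,9,10,11)]
    semiflow_solution_unique[OF assms(2,5) less_imp_le[OF assms(3)] assms(6,7,8,9,11)]
  by blast

end
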